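(* Every product of finitely many iterated log-sine integrals ${\rm Ls}_{\mathbf{k}}^{\mathbf{l}}(\pi/3)$ whose index pairs satisfy $k_j-1-l_j\ge 0$ for all $j$ can be written as a $\mathbb{Q}$-linear combination of products $\pi^m\cdot{\rm Ls}_{\mathbf{k}'}^{\mathbf{l}'}(\pi/3)$ with $m\in\mathbb{Z}_{\ge0}$, where each ${\rm Ls}_{\mathbf{k}'}^{\mathbf{l}'}(\pi/3)$ is an iterated log-sine integral at $\pi/3$ whose index pair satisfies $k'_j-1-l'_j>0$ for all $j$.
   Context: Let $A(\theta)=\log|2\sin(\theta/2)|$. For $\sigma\ge 0$, $\mathbf{k}=(k_1,\dots,k_n)\in\mathbb{N}^n$ and $\mathbf{l}=(l_1,\dots,l_n)\in\mathbb{Z}_{\ge0}^n$, the iterated log-sine integral is \[{\rm Ls}_{\mathbf{k}}^{\mathbf{l}}(\sigma)=(-1)^{n}\int_{0<\theta_{1}<\dots<\theta_{n}<\sigma}\prod_{u=1}^{n}\theta_u^{l_u}A^{k_u-1-l_u}(\theta_{u})\,d\theta_u .\] *)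

theory Defs
  imports "HOL-Analysis.Analysis"
begin

definition logsineA :: "real \<Rightarrow> real" where
  "logsineA \<theta> = ln \<bar>2 * sin (\<theta> / 2)\<bar>"

text \<open>The argument list is given from the outermost variable
  inwards: for the list [(k_n,l_n), ..., (k_1,l_1)] this is
  the integral over 0 < theta_1 < ... < theta_n < sigma of
  prod_u theta_u^l_u * A(theta_u)^(k_u-1-l_u).\<close>
fun ls_nested :: "(nat \<times> nat) list \<Rightarrow> real \<Rightarrow> real" where
  "ls_nested [] \<sigma> = 1"
| "ls_nested ((k, l) # rest) \<sigma> =
     integral {0..\<sigma>} (\<lambda>\<theta>. \<theta> ^ l * (logsineA \<theta> powi (int k - 1 - int l)) * ls_nested rest \<theta>)"

text \<open>Iterated log-sine integral Ls_k^l(sigma); the multi-index (k,l) is given as the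
  list of pairs [(k_1,l_1), ..., (k_n,l_n)].\<close>
definition Ls :: "(nat \<times> nat) list \<Rightarrow> real \<Rightarrow> real" where
  "Ls kl \<sigma> = (-1) ^ length kl * ls_nested (rev kl) \<sigma>"

end

theory Submission
  imports Defs
begin

(* The iterated integrals are indefinite integrals in their upper limit, so the product of two
   of them can be differentiated and integrated back; by induction this gives the shuffle
   relation, which turns a product of iterated log-sine integrals into a sum of single ones.
   An index (k, l) whose exponent k - 1 - l of A is zero contributes only the factor t^l.
   Integrating it by parts against the inner integral F with outermost index (k', l'),
     int_0^s t^p F(t) dt = s^(p+1) F(s) / (p+1) - F'(s) / (p+1),
   where F' is F with outermost index (k' + p + 1, l' + p + 1), removes it and keeps all other
   exponents of A. Working from the innermost index outwards, every iterated integral becomes a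
   Q-linear combination of s^m times iterated integrals with positive exponents of A, and at
   s = pi/3 the power s^m is a rational multiple of pi^m. *)

section \<open>Integrability of powers of \<open>A\<close> near \<open>0\<close>\<close>

lemma half_le_sin:
  fixes x :: real
  assumes "0 \<le> x" "x \<le> 1"
  shows "x / 2 \<le> sin x"
proof -
  have "\<bar>sin x - (\<Sum>m<3. sin_coeff m * x ^ m)\<bar> \<le> inverse (fact 3) * \<bar>x\<bar> ^ 3"
    by (rule Maclaurin_sin_bound)
  moreover have "(\<Sum>m<3. sin_coeff m * x ^ m) = x"
    by (simp add: numeral_3_eq_3 sin_coeff_def)
  ultimately have "x - x ^ 3 / 6 \<le> sin x"
    using assms by (simp add: fact_numeral abs_if split: if_splits)
  moreover have "x ^ 3 \<le> x"
    using assms mult_left_le_one_le[of x "x * x"] mult_le_one[of x x] by (simp add: power3_eq_cube)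
  ultimately show ?thesis
    using assms by linarith
qed

lemma logsineA_bounds:
  assumes "0 < t" "t \<le> pi / 3"
  shows "ln (t / 2) \<le> logsineA t" "logsineA t \<le> 0"
proof -
  have lower: "t / 4 \<le> sin (t / 2)"
    using half_le_sin[of "t / 2"] assms pi_less_4 by simp
  have "sin (t / 2) \<le> sin (pi / 6)"
    using assms by (intro sin_monotone_2pi_le) auto
  then have upper: "sin (t / 2) \<le> 1 / 2"
    by (simp add: sin_30)
  have "logsineA t = ln (2 * sin (t / 2))"
    using lower assms by (simp add: logsineA_def)
  then show "ln (t / 2) \<le> logsineA t" "logsineA t \<le> 0"
    using lower upper assms by simp_all
qed

lemma continuous_on_logsineA: "continuous_on {0<..pi / 3} logsineA"
proof -
  have "\<bar>2 * sin (t / 2)\<bar> \<noteq> 0" if "t \<in> {0<..pi / 3}" for t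
    using that pi_gt3 sin_gt_zero[of "t / 2"] by auto
  then show ?thesis
    unfolding logsineA_def by (intro continuous_intros) auto
qed

lemma ln_power_le_powr_half:
  fixes y :: real
  assumes "1 \<le> y"
  shows "ln y ^ j \<le> (2 * real j) ^ j * y powr (1 / 2)"
proof (cases "j = 0")
  case True
  then show ?thesis
    using assms by (simp add: ge_one_powr_ge_zero)
next
  case False
  have "ln y \<le> 2 * real j * y powr (1 / (2 * real j))"
    using ln_powr_bound[OF assms, of "1 / (2 * real j)"] False by (simp add: mult.commute)
  then have "ln y ^ j \<le> (2 * real j * y powr (1 / (2 * real j))) ^ j"
    using assms by (intro power_mono) auto
  also have "\<dots> = (2 * real j) ^ j * y powr (1 / 2)"
    using assms False by (simp add: power_mult_distrib powr_realpow[symmetric] powr_powr)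
  finally show ?thesis .
qed

lemma abs_logsineA_power_le:
  assumes "0 < t" "t \<le> pi / 3"
  shows "\<bar>logsineA t\<bar> ^ j \<le> (2 * real j) ^ j * sqrt 2 * t powr (- 1 / 2)"
proof -
  have "\<bar>logsineA t\<bar> \<le> ln (2 / t)"
    using logsineA_bounds[OF assms] assms by (simp add: ln_div)
  then have "\<bar>logsineA t\<bar> ^ j \<le> ln (2 / t) ^ j"
    by (intro power_mono) auto
  also have "\<dots> \<le> (2 * real j) ^ j * (2 / t) powr (1 / 2)"
    using assms pi_less_4 by (intro ln_power_le_powr_half) simp
  also have "(2 / t) powr (1 / 2) = sqrt 2 * t powr (- 1 / 2)"
    using assms by (simp add: powr_divide powr_minus divide_simps powr_half_sqrt)
  finally show ?thesis
    by simp
qed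

lemma logsineA_power_absolutely_integrable:
  "(\<lambda>t. logsineA t ^ j) absolutely_integrable_on {0<..pi / 3}"
proof (rule measurable_bounded_by_integrable_imp_absolutely_integrable)
  show "(\<lambda>t. logsineA t ^ j) \<in> borel_measurable (lebesgue_on {0<..pi / 3})"
    by (intro continuous_imp_measurable_on_sets_lebesgue continuous_intros continuous_on_logsineA)
      auto
  have "(\<lambda>t. t powr (- 1 / 2)) integrable_on {0<..pi / 3}"
    by (intro integrable_on_powr_from_0') auto
  from integrable_on_cmult_left[OF this, of "(2 * real j) ^ j * sqrt 2"]
  show "(\<lambda>t. (2 * real j) ^ j * sqrt 2 * t powr (- 1 / 2)) integrable_on {0<..pi / 3}"
    by simp
  show "norm (logsineA t ^ j) \<le> (2 * real j) ^ j * sqrt 2 * t powr (- 1 / 2)"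
    if "t \<in> {0<..pi / 3}" for t
    using abs_logsineA_power_le[of t j] that by (simp add: power_abs)
qed simp

lemma logsineA_power_mult_integrable:
  assumes h: "continuous_on {0..pi / 3} h"
  shows "(\<lambda>t. logsineA t ^ j * h t) integrable_on {0..pi / 3}"
proof -
  have "bounded (h ` {0..pi / 3})"
    by (intro compact_imp_bounded compact_continuous_image h) auto
  then have "(\<lambda>t. h t * logsineA t ^ j) absolutely_integrable_on {0<..pi / 3}"
    by (intro absolutely_integrable_bounded_measurable_product_real
        logsineA_power_absolutely_integrable continuous_imp_measurable_on_sets_lebesgue
        continuous_on_subset[OF h]) (auto elim: bounded_subset)
  then have "(\<lambda>t. logsineA t ^ j * h t) integrable_on {0<..pi / 3}"
    by (simp add: mult.commute set_lebesgue_integral_eq_integral(1))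
  then show ?thesis
    by (rule integrable_spike_set) (auto intro: negligible_subset[of "{0}"])
qed

section \<open>Iterated integrals and their shuffle product\<close>

text \<open>For \<open>l < k\<close> this is the integrand of one level of \<^const>\<open>ls_nested\<close>, with the
  exponent \<open>k - 1 - l\<close> of \<open>A\<close> as a natural number.\<close>
definition ls_kernel :: "nat \<Rightarrow> nat \<Rightarrow> real \<Rightarrow> real" where
  "ls_kernel k l t = t ^ l * logsineA t ^ (k - 1 - l)"

lemma ls_kernel_shift: "ls_kernel (k + m) (l + m) t = t ^ m * ls_kernel k l t"
  by (simp add: ls_kernel_def power_add)

lemma ls_kernel_mult_integrable:
  assumes h: "continuous_on {0..pi / 3} h" and s: "s \<in> {0..pi / 3}"
  shows "(\<lambda>t. ls_kernel k l t * h t) integrable_on {0..s}"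
proof -
  have "(\<lambda>t. logsineA t ^ (k - 1 - l) * (t ^ l * h t)) integrable_on {0..pi / 3}"
    by (intro logsineA_power_mult_integrable continuous_intros h)
  then have "(\<lambda>t. ls_kernel k l t * h t) integrable_on {0..pi / 3}"
    by (simp add: ls_kernel_def mult_ac)
  then show ?thesis
    by (rule integrable_on_subinterval) (use s in auto)
qed

definition nonneg_A_exps :: "(nat \<times> nat) list \<Rightarrow> bool" where
  "nonneg_A_exps w \<longleftrightarrow> (\<forall>(k, l) \<in> set w. l < k)"

definition pos_A_exps :: "(nat \<times> nat) list \<Rightarrow> bool" where
  "pos_A_exps w \<longleftrightarrow> (\<forall>(k, l) \<in> set w. l + 1 < k)"

lemma nonneg_A_exps_simps [simp]:
  "nonneg_A_exps []"
  "nonneg_A_exps ((k, l) # w) \<longleftrightarrow> l < k \<and> nonneg_A_exps w"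
  by (auto simp: nonneg_A_exps_def)

lemma pos_A_exps_simps [simp]:
  "pos_A_exps []"
  "pos_A_exps ((k, l) # w) \<longleftrightarrow> l + 1 < k \<and> pos_A_exps w"
  by (auto simp: pos_A_exps_def)

lemma pos_A_exps_imp_nonneg: "pos_A_exps w \<Longrightarrow> nonneg_A_exps w"
  by (auto simp: pos_A_exps_def nonneg_A_exps_def)

declare ls_nested.simps(2) [simp del]

lemma ls_nested_Cons:
  assumes "l < k"
  shows "ls_nested ((k, l) # w) = (\<lambda>s. integral {0..s} (\<lambda>t. ls_kernel k l t * ls_nested w t))"
proof -
  have "int k - 1 - int l = int (k - 1 - l)"
    using assms by simp
  then show ?thesis
    by (intro ext) (simp only: ls_nested.simps(2) ls_kernel_def power_int_of_nat)
qed

lemma ls_nested_Cons_at_0: "l < k \<Longrightarrow> ls_nested ((k, l) # w) 0 = 0"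
  by (simp add: ls_nested_Cons)

lemma continuous_on_ls_nested: "nonneg_A_exps w \<Longrightarrow> continuous_on {0..pi / 3} (ls_nested w)"
proof (induction w)
  case (Cons p w)
  obtain k l where p: "p = (k, l)"
    by force
  with Cons have "(\<lambda>t. ls_kernel k l t * ls_nested w t) integrable_on {0..pi / 3}"
    by (intro ls_kernel_mult_integrable) auto
  then show ?case
    using Cons.prems by (simp add: p ls_nested_Cons indefinite_integral_continuous_1)
qed simp

lemma ls_nested_Cons_has_derivative:
  assumes "l < k" "nonneg_A_exps w" "0 < s" "s < pi / 3"
  shows "(ls_nested ((k, l) # w) has_real_derivative ls_kernel k l s * ls_nested w s) (at s)"
proof -
  let ?f = "\<lambda>t. ls_kernel k l t * ls_nested w t"
  have cont: "continuous_on {0..pi / 3} (ls_nested w)"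
    using assms by (intro continuous_on_ls_nested)
  have "continuous_on {0<..<pi / 3} ?f"
    unfolding ls_kernel_def
    by (intro continuous_intros continuous_on_subset[OF continuous_on_logsineA]
        continuous_on_subset[OF cont]) auto
  then have "isCont ?f s"
    using assms by (intro continuous_on_interior) auto
  then have "continuous (at s within ({0..pi / 3} - {})) ?f"
    by (rule continuous_at_imp_continuous_at_within)
  moreover have "?f integrable_on {0..pi / 3}"
    using ls_kernel_mult_integrable[OF cont] by simp
  ultimately have "((\<lambda>u. integral {0..u} ?f) has_vector_derivative ?f s) (at s within ({0..pi / 3} - {}))"
    using assms by (intro integral_has_vector_derivative_continuous_at) auto
  moreover have "at s within ({0..pi / 3} - {}) = at s"
    using assms by (intro at_within_interior) auto
  ultimately show ?thesis
    using assms(1) unfolding ls_nested_Cons[OF assms(1)] has_real_derivative_iff_has_vector_derivative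
    by simp
qed

lemma integral_sum_list:
  assumes "\<And>x. x \<in> set xs \<Longrightarrow> f x integrable_on S"
  shows "integral S (\<lambda>t. \<Sum>x\<leftarrow>xs. f x t) = (\<Sum>x\<leftarrow>xs. integral S (f x))"
proof -
  have "integral S (\<lambda>t. \<Sum>i<length xs. f (xs ! i) t) = (\<Sum>i<length xs. integral S (f (xs ! i)))"
    using assms by (intro integral_sum) auto
  then show ?thesis
    by (simp add: sum_list_sum_nth atLeast0LessThan)
qed

text \<open>A list rather than the set \<^const>\<open>shuffles\<close>: a shuffle that arises in several
  ways contributes to the shuffle product with its multiplicity.\<close>
fun shuffle_list :: "'a list \<Rightarrow> 'a list \<Rightarrow> 'a list list" where
  "shuffle_list [] ys = [ys]"
| "shuffle_list xs [] = [xs]"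
| "shuffle_list (x # xs) (y # ys) =
     map ((#) x) (shuffle_list xs (y # ys)) @ map ((#) y) (shuffle_list (x # xs) ys)"

lemma set_shuffle_list: "v \<in> set (shuffle_list xs ys) \<Longrightarrow> set v \<subseteq> set xs \<union> set ys"
  by (induction xs ys arbitrary: v rule: shuffle_list.induct) fastforce+

lemma nonneg_A_exps_shuffle_list:
  "nonneg_A_exps xs \<Longrightarrow> nonneg_A_exps ys \<Longrightarrow> v \<in> set (shuffle_list xs ys) \<Longrightarrow> nonneg_A_exps v"
  unfolding nonneg_A_exps_def by (blast dest: set_shuffle_list)

lemma integral_kernel_mult_sum_list_ls_nested:
  assumes "l < k" "\<forall>u \<in> set U. nonneg_A_exps u" "s \<in> {0..pi / 3}"
    and "\<And>t. t \<in> {0..s} \<Longrightarrow> g t = (\<Sum>u\<leftarrow>U. ls_nested u t)"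
  shows "integral {0..s} (\<lambda>t. ls_kernel k l t * g t) = (\<Sum>u\<leftarrow>U. ls_nested ((k, l) # u) s)"
proof -
  have "integral {0..s} (\<lambda>t. ls_kernel k l t * g t) =
    integral {0..s} (\<lambda>t. \<Sum>u\<leftarrow>U. ls_kernel k l t * ls_nested u t)"
    using assms(4) by (intro integral_cong) (simp add: sum_list_const_mult)
  also have "\<dots> = (\<Sum>u\<leftarrow>U. integral {0..s} (\<lambda>t. ls_kernel k l t * ls_nested u t))"
    using assms(2,3) by (intro integral_sum_list ls_kernel_mult_integrable continuous_on_ls_nested) auto
  finally show ?thesis
    using assms(1) by (simp add: ls_nested_Cons)
qed

lemma ls_nested_Cons_mult_Cons:
  assumes "l1 < k1" "nonneg_A_exps xs" "l2 < k2" "nonneg_A_exps ys" "s \<in> {0..pi / 3}"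
  defines "a \<equiv> (k1, l1) # xs" and "b \<equiv> (k2, l2) # ys"
  shows "ls_nested a s * ls_nested b s =
    integral {0..s} (\<lambda>t. ls_kernel k1 l1 t * (ls_nested xs t * ls_nested b t)) +
    integral {0..s} (\<lambda>t. ls_kernel k2 l2 t * (ls_nested a t * ls_nested ys t))"
proof -
  let ?f1 = "\<lambda>t. ls_kernel k1 l1 t * (ls_nested xs t * ls_nested b t)"
  let ?f2 = "\<lambda>t. ls_kernel k2 l2 t * (ls_nested a t * ls_nested ys t)"
  have s: "0 \<le> s" "s \<le> pi / 3"
    using assms(5) by auto
  have cont: "continuous_on {0..pi / 3} (ls_nested v)" if "v \<in> {xs, ys, a, b}" for v
    using that assms by (auto intro: continuous_on_ls_nested)
  have "((\<lambda>t. ?f1 t + ?f2 t) has_integral ls_nested a s * ls_nested b s - ls_nested a 0 * ls_nested b 0)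
    {0..s}"
  proof (rule fundamental_theorem_of_calculus_interior[OF s(1)])
    show "continuous_on {0..s} (\<lambda>t. ls_nested a t * ls_nested b t)"
      using s by (intro continuous_on_subset[OF continuous_on_mult[OF cont cont]]) auto
    show "((\<lambda>t. ls_nested a t * ls_nested b t) has_vector_derivative ?f1 t + ?f2 t) (at t)"
      if "t \<in> {0<..<s}" for t
    proof -
      have "0 < t" "t < pi / 3"
        using that s by auto
      then have "(ls_nested a has_real_derivative ls_kernel k1 l1 t * ls_nested xs t) (at t)"
        "(ls_nested b has_real_derivative ls_kernel k2 l2 t * ls_nested ys t) (at t)"
        unfolding a_def b_def using assms by (auto intro: ls_nested_Cons_has_derivative)
      from DERIV_mult'[OF this] show ?thesis
        by (simp add: has_real_derivative_iff_has_vector_derivative[symmetric] algebra_simps)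
    qed
  qed
  moreover have "ls_nested a 0 = 0"
    unfolding a_def using assms(1) by (rule ls_nested_Cons_at_0)
  ultimately have "((\<lambda>t. ?f1 t + ?f2 t) has_integral ls_nested a s * ls_nested b s) {0..s}"
    by simp
  then have "ls_nested a s * ls_nested b s = integral {0..s} (\<lambda>t. ?f1 t + ?f2 t)"
    by (rule integral_unique[symmetric])
  also have "\<dots> = integral {0..s} ?f1 + integral {0..s} ?f2"
    using assms(5) by (intro integral_add ls_kernel_mult_integrable continuous_on_mult cont) auto
  finally show ?thesis .
qed

lemma ls_nested_mult_shuffle:
  assumes "nonneg_A_exps xs" "nonneg_A_exps ys" "s \<in> {0..pi / 3}"
  shows "ls_nested xs s * ls_nested ys s = (\<Sum>v\<leftarrow>shuffle_list xs ys. ls_nested v s)"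
  using assms
proof (induction xs ys arbitrary: s rule: shuffle_list.induct)
  case (3 x xs y ys)
  obtain k1 l1 k2 l2 where xy: "x = (k1, l1)" "y = (k2, l2)"
    by force
  have hyps: "l1 < k1" "nonneg_A_exps xs" "l2 < k2" "nonneg_A_exps ys"
    using "3.prems" by (auto simp: xy)
  have "ls_nested (x # xs) s * ls_nested (y # ys) s =
    integral {0..s} (\<lambda>t. ls_kernel k1 l1 t * (ls_nested xs t * ls_nested (y # ys) t)) +
    integral {0..s} (\<lambda>t. ls_kernel k2 l2 t * (ls_nested (x # xs) t * ls_nested ys t))"
    unfolding xy using hyps "3.prems"(3) by (rule ls_nested_Cons_mult_Cons)
  also have "\<dots> = (\<Sum>u\<leftarrow>shuffle_list xs (y # ys). ls_nested (x # u) s) +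
    (\<Sum>u\<leftarrow>shuffle_list (x # xs) ys. ls_nested (y # u) s)"
    unfolding xy using hyps "3.prems" "3.IH"
    by (intro arg_cong2[where f = "(+)"] integral_kernel_mult_sum_list_ls_nested)
      (auto simp: xy dest: nonneg_A_exps_shuffle_list[rotated 2])
  finally show ?case
    by (simp only: shuffle_list.simps(3) map_append sum_list_append map_map o_def)
qed simp_all

section \<open>Reduction to positive exponents of \<open>A\<close>\<close>

definition ls_comb :: "(rat \<times> nat \<times> (nat \<times> nat) list) list \<Rightarrow> real \<Rightarrow> real" where
  "ls_comb T s = (\<Sum>(c, m, w) \<leftarrow> T. real_of_rat c * s ^ m * ls_nested w s)"

lemma ls_comb_Nil [simp]: "ls_comb [] = (\<lambda>s. 0)"
  by (simp add: ls_comb_def fun_eq_iff)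

lemma ls_comb_Cons [simp]:
  "ls_comb ((c, m, w) # T) = (\<lambda>s. real_of_rat c * s ^ m * ls_nested w s + ls_comb T s)"
  by (simp add: ls_comb_def fun_eq_iff)

lemma ls_comb_append [simp]: "ls_comb (T @ U) = (\<lambda>s. ls_comb T s + ls_comb U s)"
  by (simp add: ls_comb_def fun_eq_iff)

lemma continuous_on_ls_comb:
  "\<forall>(c, m, w) \<in> set T. nonneg_A_exps w \<Longrightarrow> continuous_on {0..pi / 3} (ls_comb T)"
proof (induction T)
  case (Cons p T)
  then obtain c m w where "p = (c, m, w)" "nonneg_A_exps w" "\<forall>(c, m, w) \<in> set T. nonneg_A_exps w"
    by (cases p) auto
  with Cons.IH show ?case
    by (auto intro!: continuous_intros continuous_on_ls_nested)
qed simp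

lemma integral_kernel_mult_ls_comb:
  assumes "l < k" "\<forall>(c, m, w) \<in> set T. nonneg_A_exps w" "s \<in> {0..pi / 3}"
  shows "integral {0..s} (\<lambda>t. ls_kernel k l t * ls_comb T t) =
    ls_comb (map (\<lambda>(c, m, w). (c, 0, (k + m, l + m) # w)) T) s"
  using assms(2)
proof (induction T)
  case (Cons p T)
  obtain c m w where p: "p = (c, m, w)"
    by (cases p)
  have w: "nonneg_A_exps w" and T: "\<forall>(c, m, w) \<in> set T. nonneg_A_exps w"
    using Cons.prems by (auto simp: p)
  have "continuous_on {0..pi / 3} (ls_comb [p])" "continuous_on {0..pi / 3} (ls_comb T)"
    using w T by (intro continuous_on_ls_comb; auto simp: p)+
  then have "integral {0..s} (\<lambda>t. ls_kernel k l t * ls_comb [p] t + ls_kernel k l t * ls_comb T t) =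
    integral {0..s} (\<lambda>t. ls_kernel k l t * ls_comb [p] t) +
    integral {0..s} (\<lambda>t. ls_kernel k l t * ls_comb T t)"
    using assms(3) by (intro integral_add ls_kernel_mult_integrable)
  then have "integral {0..s} (\<lambda>t. ls_kernel k l t * ls_comb (p # T) t) =
    integral {0..s} (\<lambda>t. ls_kernel k l t * ls_comb [p] t) +
    integral {0..s} (\<lambda>t. ls_kernel k l t * ls_comb T t)"
    using ls_comb_append[of "[p]" T] by (simp add: distrib_left)
  also have "integral {0..s} (\<lambda>t. ls_kernel k l t * ls_comb [p] t) =
    real_of_rat c * integral {0..s} (\<lambda>t. ls_kernel (k + m) (l + m) t * ls_nested w t)"
    by (simp add: p ls_kernel_shift mult_ac)
  also have "\<dots> = real_of_rat c * ls_nested ((k + m, l + m) # w) s"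
    using assms(1) by (simp add: ls_nested_Cons)
  finally show ?case
    using Cons.IH[OF T] by (simp add: p)
qed simp

text \<open>Integration by parts of \<open>t ^ p\<close> against the outermost integral: the new
  iterated integral has its outermost index raised to \<open>(k + p + 1, l + p + 1)\<close>,
  which leaves its exponent of \<open>A\<close> unchanged.\<close>
fun ibp_power :: "rat \<Rightarrow> nat \<Rightarrow> (nat \<times> nat) list \<Rightarrow> (rat \<times> nat \<times> (nat \<times> nat) list) list" where
  "ibp_power c p [] = [(c / of_nat (p + 1), p + 1, [])]"
| "ibp_power c p ((k, l) # w) =
    [(c / of_nat (p + 1), p + 1, (k, l) # w), (- c / of_nat (p + 1), 0, (k + p + 1, l + p + 1) # w)]"

lemma pos_A_exps_ibp_power:
  "pos_A_exps w \<Longrightarrow> (c', m, v) \<in> set (ibp_power c p w) \<Longrightarrow> pos_A_exps v"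
  by (cases "(c, p, w)" rule: ibp_power.cases) auto

lemma ls_comb_ibp_power_has_derivative:
  assumes "pos_A_exps w" "0 < t" "t < pi / 3"
  shows "(ls_comb (ibp_power c p w) has_real_derivative real_of_rat c * t ^ p * ls_nested w t) (at t)"
proof -
  have dpow: "((\<lambda>t. t ^ (p + 1)) has_real_derivative real (p + 1) * t ^ p) (at t)"
    using DERIV_pow[of "p + 1" t] by simp
  show ?thesis
  proof (cases w)
    case Nil
    from DERIV_cmult[OF dpow, of "real_of_rat c / real (p + 1)"] show ?thesis
      by (simp add: Nil of_rat_divide of_rat_add of_rat_of_nat_eq)
  next
    case (Cons q w')
    obtain k l where q: "q = (k, l)"
      by force
    have kl: "l < k" "l + p + 1 < k + p + 1" and w': "nonneg_A_exps w'"
      using assms(1) by (auto simp: Cons q pos_A_exps_imp_nonneg)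
    let ?v = "(k + p + 1, l + p + 1) # w'"
    have "((\<lambda>t. real_of_rat c / real (p + 1) * (t ^ (p + 1) * ls_nested w t - ls_nested ?v t))
      has_real_derivative real_of_rat c / real (p + 1) *
        (real (p + 1) * t ^ p * ls_nested w t + ls_kernel k l t * ls_nested w' t * t ^ (p + 1)
          - ls_kernel (k + p + 1) (l + p + 1) t * ls_nested w' t)) (at t)"
      using assms(2,3) kl w' unfolding Cons q
      by (intro DERIV_cmult DERIV_diff DERIV_mult dpow ls_nested_Cons_has_derivative)
    moreover have "ls_kernel (k + p + 1) (l + p + 1) t = t ^ (p + 1) * ls_kernel k l t"
      using ls_kernel_shift[of k "p + 1" l t] by (simp add: add.assoc)
    then have "real_of_rat c / real (p + 1) *
        (real (p + 1) * t ^ p * ls_nested w t + ls_kernel k l t * ls_nested w' t * t ^ (p + 1)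
          - ls_kernel (k + p + 1) (l + p + 1) t * ls_nested w' t) = real_of_rat c * t ^ p * ls_nested w t"
      by (simp add: field_simps)
    moreover have "ls_comb (ibp_power c p w) =
        (\<lambda>t. real_of_rat c / real (p + 1) * (t ^ (p + 1) * ls_nested w t - ls_nested ?v t))"
      by (simp add: Cons q fun_eq_iff of_rat_divide of_rat_minus of_rat_add of_rat_of_nat_eq
          right_diff_distrib)
    ultimately show ?thesis
      by simp
  qed
qed

lemma integral_power_mult_ls_nested:
  assumes "pos_A_exps w" "s \<in> {0..pi / 3}"
  shows "integral {0..s} (\<lambda>t. real_of_rat c * t ^ p * ls_nested w t) = ls_comb (ibp_power c p w) s"
proof -
  have "((\<lambda>t. real_of_rat c * t ^ p * ls_nested w t) has_integral
      ls_comb (ibp_power c p w) s - ls_comb (ibp_power c p w) 0) {0..s}"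
  proof (rule fundamental_theorem_of_calculus_interior)
    have "continuous_on {0..pi / 3} (ls_comb (ibp_power c p w))"
      by (intro continuous_on_ls_comb)
        (auto intro: pos_A_exps_imp_nonneg pos_A_exps_ibp_power[OF assms(1)])
    then show "continuous_on {0..s} (ls_comb (ibp_power c p w))"
      by (rule continuous_on_subset) (use assms(2) in auto)
    show "(ls_comb (ibp_power c p w) has_vector_derivative real_of_rat c * t ^ p * ls_nested w t) (at t)"
      if "t \<in> {0<..<s}" for t
      using that assms ls_comb_ibp_power_has_derivative[of w t c p]
      by (simp add: has_real_derivative_iff_has_vector_derivative)
  qed (use assms(2) in simp)
  moreover have "ls_comb (ibp_power c p w) 0 = 0"
    using assms(1) by (cases "(c, p, w)" rule: ibp_power.cases) (auto simp: ls_nested_Cons_at_0)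
  ultimately show ?thesis
    by (simp add: integral_unique)
qed

lemma integral_power_mult_ls_comb:
  assumes "\<forall>(c, m, w) \<in> set T. pos_A_exps w" "s \<in> {0..pi / 3}"
  shows "integral {0..s} (\<lambda>t. t ^ l * ls_comb T t) =
    ls_comb (concat (map (\<lambda>(c, m, w). ibp_power c (l + m) w) T)) s"
  using assms(1)
proof (induction T)
  case (Cons p T)
  obtain c m w where p: "p = (c, m, w)"
    by (cases p)
  have w: "pos_A_exps w" and T: "\<forall>(c, m, w) \<in> set T. pos_A_exps w"
    using Cons.prems by (auto simp: p)
  have "continuous_on {0..s} (ls_comb [p])" "continuous_on {0..s} (ls_comb T)"
    using w T assms(2)
    by (intro continuous_on_subset[OF continuous_on_ls_comb];
        auto simp: p pos_A_exps_imp_nonneg)+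
  then have "integral {0..s} (\<lambda>t. t ^ l * ls_comb [p] t + t ^ l * ls_comb T t) =
    integral {0..s} (\<lambda>t. t ^ l * ls_comb [p] t) + integral {0..s} (\<lambda>t. t ^ l * ls_comb T t)"
    by (intro integral_add integrable_continuous_interval continuous_intros)
  then have "integral {0..s} (\<lambda>t. t ^ l * ls_comb (p # T) t) =
    integral {0..s} (\<lambda>t. t ^ l * ls_comb [p] t) + integral {0..s} (\<lambda>t. t ^ l * ls_comb T t)"
    using ls_comb_append[of "[p]" T] by (simp add: distrib_left)
  also have "integral {0..s} (\<lambda>t. t ^ l * ls_comb [p] t) = ls_comb (ibp_power c (l + m) w) s"
    using integral_power_mult_ls_nested[OF w assms(2), of c "l + m"]
    by (simp add: p power_add mult_ac)
  finally show ?case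
    using Cons.IH[OF T] by (simp add: p)
qed simp

lemma ls_nested_eq_ls_comb_pos:
  "nonneg_A_exps w \<Longrightarrow>
    \<exists>T. (\<forall>(c, m, v) \<in> set T. pos_A_exps v) \<and> (\<forall>s \<in> {0..pi / 3}. ls_nested w s = ls_comb T s)"
proof (induction w)
  case Nil
  show ?case
    by (intro exI[of _ "[(1, 0, [])]"]) simp
next
  case (Cons q w)
  obtain k l where q: "q = (k, l)"
    by force
  have kl: "l < k" and w: "nonneg_A_exps w"
    using Cons.prems by (simp_all add: q)
  obtain T where T: "\<forall>(c, m, v) \<in> set T. pos_A_exps v"
    and eq: "\<forall>s \<in> {0..pi / 3}. ls_nested w s = ls_comb T s"
    using Cons.IH[OF w] by (elim exE conjE) (rule that)
  have nested: "ls_nested (q # w) s = integral {0..s} (\<lambda>t. ls_kernel k l t * ls_comb T t)"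
    if "s \<in> {0..pi / 3}" for s
  proof -
    have "ls_nested (q # w) s = integral {0..s} (\<lambda>t. ls_kernel k l t * ls_nested w t)"
      by (simp add: q ls_nested_Cons[OF kl])
    also have "\<dots> = integral {0..s} (\<lambda>t. ls_kernel k l t * ls_comb T t)"
      using eq that by (intro integral_cong) auto
    finally show ?thesis .
  qed
  show ?case
  proof (cases "l + 1 < k")
    case True
    have "\<forall>(c, m, v) \<in> set T. nonneg_A_exps v"
      using T by (auto intro: pos_A_exps_imp_nonneg)
    with T nested kl True show ?thesis
      by (intro exI[of _ "map (\<lambda>(c, m, v). (c, 0, (k + m, l + m) # v)) T"])
        (auto simp: integral_kernel_mult_ls_comb)
  next
    case False
    then have "ls_kernel k l t = t ^ l" for t
      using kl by (simp add: ls_kernel_def)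
    with T nested show ?thesis
      by (intro exI[of _ "concat (map (\<lambda>(c, m, v). ibp_power c (l + m) v) T)"])
        (auto simp: integral_power_mult_ls_comb dest!: pos_A_exps_ibp_power)
  qed
qed

fun shuffle_list_prod :: "'a list list \<Rightarrow> 'a list list" where
  "shuffle_list_prod [] = [[]]"
| "shuffle_list_prod (w # ws) = concat (map (shuffle_list w) (shuffle_list_prod ws))"

lemma nonneg_A_exps_shuffle_list_prod:
  "\<forall>w \<in> set ws. nonneg_A_exps w \<Longrightarrow> v \<in> set (shuffle_list_prod ws) \<Longrightarrow> nonneg_A_exps v"
  by (induction ws arbitrary: v) (auto intro: nonneg_A_exps_shuffle_list)

lemma prod_list_ls_nested:
  assumes "\<forall>w \<in> set ws. nonneg_A_exps w" "s \<in> {0..pi / 3}"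
  shows "(\<Prod>w\<leftarrow>ws. ls_nested w s) = (\<Sum>v\<leftarrow>shuffle_list_prod ws. ls_nested v s)"
  using assms(1)
proof (induction ws)
  case (Cons w ws)
  have "\<forall>v \<in> set (shuffle_list_prod ws). nonneg_A_exps v"
    using Cons.prems by (auto intro: nonneg_A_exps_shuffle_list_prod)
  moreover have "ls_nested w s * (\<Sum>v\<leftarrow>V. ls_nested v s) =
      (\<Sum>u\<leftarrow>concat (map (shuffle_list w) V). ls_nested u s)"
    if "\<forall>v \<in> set V. nonneg_A_exps v" for V
    using that Cons.prems assms(2) by (induction V) (auto simp: distrib_left ls_nested_mult_shuffle)
  ultimately show ?case
    using Cons by simp
qed simp

lemma sum_list_ls_nested_eq_ls_comb_pos:
  "\<forall>v \<in> set V. nonneg_A_exps v \<Longrightarrow>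
    \<exists>T. (\<forall>(c, m, w) \<in> set T. pos_A_exps w) \<and>
      (\<forall>s \<in> {0..pi / 3}. (\<Sum>v\<leftarrow>V. ls_nested v s) = ls_comb T s)"
proof (induction V)
  case Nil
  show ?case
    by (intro exI[of _ "[]"]) simp
next
  case (Cons v V)
  obtain T where "\<forall>(c, m, w) \<in> set T. pos_A_exps w" "\<forall>s \<in> {0..pi / 3}. ls_nested v s = ls_comb T s"
    using Cons.prems ls_nested_eq_ls_comb_pos[of v] by auto
  moreover obtain U where "\<forall>(c, m, w) \<in> set U. pos_A_exps w"
    "\<forall>s \<in> {0..pi / 3}. (\<Sum>v\<leftarrow>V. ls_nested v s) = ls_comb U s"
    using Cons by auto
  ultimately show ?case
    by (intro exI[of _ "T @ U"]) auto
qed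

lemma prod_list_Ls:
  "(\<Prod>kl\<leftarrow>F. Ls kl s) =
    real_of_rat (\<Prod>kl\<leftarrow>F. (- 1) ^ length kl) * (\<Prod>w\<leftarrow>map rev F. ls_nested w s)"
  by (induction F) (auto simp: Ls_def of_rat_mult of_rat_power)

lemma ls_comb_pi_third_eq_Ls:
  "real_of_rat q * ls_comb T (pi / 3) =
    (\<Sum>(c, m, kl) \<leftarrow> map (\<lambda>(c, m, w). (q * c * (1 / 3) ^ m * (- 1) ^ length w, m, rev w)) T.
      real_of_rat c * pi ^ m * Ls kl (pi / 3))"
proof (induction T)
  case (Cons p T)
  obtain c m w where p: "p = (c, m, w)"
    by (cases p)
  have "(- 1 :: real) ^ length w * (- 1) ^ length w = 1"
    by (simp add: power_mult_distrib[symmetric])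
  with Cons.IH show ?case
    by (simp add: p Ls_def of_rat_mult of_rat_power of_rat_divide power_divide algebra_simps)
qed simp

theorem corollary2p3:
  fixes F :: "(nat \<times> nat) list list"
  assumes "\<forall>kl \<in> set F. \<forall>(k, l) \<in> set kl. 1 \<le> k \<and> int k - 1 - int l \<ge> 0"
  shows "\<exists>T :: (rat \<times> nat \<times> (nat \<times> nat) list) list.
           (\<forall>(c, m, kl') \<in> set T. \<forall>(k, l) \<in> set kl'. 1 \<le> k \<and> int k - 1 - int l > 0) \<and>
           (\<Prod>kl \<leftarrow> F. Ls kl (pi / 3)) =
             (\<Sum>(c, m, kl') \<leftarrow> T. real_of_rat c * pi ^ m * Ls kl' (pi / 3))"
proof -
  let ?sign = "\<Prod>kl\<leftarrow>F. (- 1 :: rat) ^ length kl"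
  have F: "\<forall>w \<in> set (map rev F). nonneg_A_exps w"
    using assms by (fastforce simp: nonneg_A_exps_def)
  then have "\<forall>v \<in> set (shuffle_list_prod (map rev F)). nonneg_A_exps v"
    using nonneg_A_exps_shuffle_list_prod by blast
  then obtain T where T: "\<forall>(c, m, w) \<in> set T. pos_A_exps w"
    and eq: "\<forall>s \<in> {0..pi / 3}. (\<Sum>v\<leftarrow>shuffle_list_prod (map rev F). ls_nested v s) = ls_comb T s"
    using sum_list_ls_nested_eq_ls_comb_pos by blast
  have "(\<Prod>w\<leftarrow>map rev F. ls_nested w (pi / 3)) = ls_comb T (pi / 3)"
    using eq prod_list_ls_nested[OF F] by simp
  then have "(\<Prod>kl\<leftarrow>F. Ls kl (pi / 3)) = real_of_rat ?sign * ls_comb T (pi / 3)"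
    by (simp add: prod_list_Ls)
  with T show ?thesis
    by (intro exI[of _ "map (\<lambda>(c, m, w). (?sign * c * (1 / 3) ^ m * (- 1) ^ length w, m, rev w)) T"])
      (fastforce simp: ls_comb_pi_third_eq_Ls pos_A_exps_def)
qed

end
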